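(* Let $n\ge1$ and consider the $n\times3$ grid graph (vertices at the intersections of $n$ rows and $3$ columns, adjacent iff they are consecutive in the same row or the same column), with vertices ordered row-wise starting from the top row: the vertex in row $a$ and column $b$ receives label $3(a-1)+b$. Then this ordered grid is Generalized Bartlett, i.e., the row-wise ordering is a Generalized Bartlett ordering of the grid.
   Context: For a graph $(V,E)$ with $|V|=p$ and ordering $\sigma:V\to\{1,\dots,p\}$, set $E^\sigma_0=E$, $E^\sigma_i=E^\sigma_{i-1}\cup\{\{u,v\}:u\ne v,\sigma(u)>i,\sigma(v)>i,\{u,\sigma^{-1}(i)\},\{v,\sigma^{-1}(i)\}\in E^\sigma_{i-1}\}$ for $i=1,\dots,p-2$, and $D^\sigma(E)=E^\sigma_{p-2}$. $\sigma$ is a Generalized Bartlett ordering if there are no $u,v,w$ with $\{u,v\},\{v,w\},\{u,w\}\notin E$ but all three in $D^\sigma(E)$; the graph is Generalized Bartlett if such an ordering exists. *)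

theory Defs
  imports Main
begin

definition fill_step :: "'a set \<Rightarrow> ('a \<Rightarrow> nat) \<Rightarrow> 'a set set \<Rightarrow> nat \<Rightarrow> 'a set set" where
  "fill_step V \<sigma> E i = E \<union> {{u, v} | u v. u \<noteq> v \<and> \<sigma> u > i \<and> \<sigma> v > i \<and>
      (\<exists>w\<in>V. \<sigma> w = i \<and> {u, w} \<in> E \<and> {v, w} \<in> E)}"

fun fill_seq :: "'a set \<Rightarrow> ('a \<Rightarrow> nat) \<Rightarrow> 'a set set \<Rightarrow> nat \<Rightarrow> 'a set set" where
  "fill_seq V \<sigma> E 0 = E"
| "fill_seq V \<sigma> E (Suc i) = fill_step V \<sigma> (fill_seq V \<sigma> E i) (Suc i)"

definition D_fill :: "'a set \<Rightarrow> ('a \<Rightarrow> nat) \<Rightarrow> 'a set set \<Rightarrow> 'a set set" where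
  "D_fill V \<sigma> E = fill_seq V \<sigma> E (card V - 2)"

definition GB_ordering :: "'a set \<Rightarrow> 'a set set \<Rightarrow> ('a \<Rightarrow> nat) \<Rightarrow> bool" where
  "GB_ordering V E \<sigma> \<longleftrightarrow> bij_betw \<sigma> V {1..card V} \<and>
     \<not> (\<exists>u v w. {u, v} \<notin> E \<and> {v, w} \<notin> E \<and> {u, w} \<notin> E \<and>
          {u, v} \<in> D_fill V \<sigma> E \<and> {v, w} \<in> D_fill V \<sigma> E \<and> {u, w} \<in> D_fill V \<sigma> E)"

definition generalized_bartlett :: "'a set \<Rightarrow> 'a set set \<Rightarrow> bool" where
  "generalized_bartlett V E \<longleftrightarrow> (\<exists>\<sigma>. GB_ordering V E \<sigma>)"

definition grid_V :: "nat \<Rightarrow> (nat \<times> nat) set" where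
  "grid_V n = {1..n} \<times> {1..3}"

definition grid_E :: "nat \<Rightarrow> (nat \<times> nat) set set" where
  "grid_E n = {{(a, b), (a, b + 1)} | a b. 1 \<le> a \<and> a \<le> n \<and> 1 \<le> b \<and> b + 1 \<le> 3}
            \<union> {{(a, b), (a + 1, b)} | a b. 1 \<le> a \<and> a + 1 \<le> n \<and> 1 \<le> b \<and> b \<le> 3}"

definition rowwise :: "nat \<times> nat \<Rightarrow> nat" where
  "rowwise = (\<lambda>(a, b). 3 * (a - 1) + b)"

end

theory Submission
  imports Defs
begin

text \<open>Eliminating the grid row by row creates, besides the grid edges, exactly the chords
  joining (a,b) to (a+1,b') with b' < b, and joining (a,1) to (a,3) for a \<ge> 2. The grid
  together with these chords is closed under elimination (the later neighbours of every
  vertex are pairwise adjacent), so the filled graph is contained in it; and no three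
  chords form a triangle.\<close>

lemma fill_seq_subset_if_closed:
  assumes "E \<subseteq> G"
    and closed: "\<And>u v w. u \<noteq> v \<Longrightarrow> \<sigma> u > \<sigma> w \<Longrightarrow> \<sigma> v > \<sigma> w \<Longrightarrow>
        {u, w} \<in> G \<Longrightarrow> {v, w} \<in> G \<Longrightarrow> {u, v} \<in> G"
  shows "fill_seq V \<sigma> E k \<subseteq> G"
proof (induction k)
  case 0
  then show ?case using assms(1) by simp
next
  case (Suc k)
  show ?case
  proof
    fix e assume "e \<in> fill_seq V \<sigma> E (Suc k)"
    then consider "e \<in> fill_seq V \<sigma> E k"
      | u v w where "e = {u, v}" "u \<noteq> v" "\<sigma> u > Suc k" "\<sigma> v > Suc k" "\<sigma> w = Suc k"
          "{u, w} \<in> fill_seq V \<sigma> E k" "{v, w} \<in> fill_seq V \<sigma> E k"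
      unfolding fill_seq.simps fill_step_def by blast
    then show "e \<in> G"
    proof cases
      case 2
      then show ?thesis using Suc.IH closed[of u v w] by auto
    qed (use Suc.IH in blast)
  qed
qed

lemma GB_orderingI:
  assumes "bij_betw \<sigma> V {1..card V}"
    and "D_fill V \<sigma> E \<subseteq> E \<union> F"
    and "\<And>u v w. {u, v} \<in> F \<Longrightarrow> {v, w} \<in> F \<Longrightarrow> {u, w} \<in> F \<Longrightarrow> False"
  shows "GB_ordering V E \<sigma>"
  using assms unfolding GB_ordering_def by blast

definition rowwise_inv :: "nat \<Rightarrow> nat \<times> nat" where
  "rowwise_inv k = ((k - 1) div 3 + 1, (k - 1) mod 3 + 1)"

lemma rowwise_inv_rowwise:
  assumes "1 \<le> a" "b \<in> {1..3}"
  shows "rowwise_inv (rowwise (a, b)) = (a, b)"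
proof -
  obtain q r where a: "a = Suc q" and b: "b = Suc r" and "r < 3"
    using assms by (cases a; cases b) auto
  then have "rowwise (a, b) - 1 = r + 3 * q" by (simp add: rowwise_def)
  then show ?thesis using \<open>r < 3\<close> by (simp add: rowwise_inv_def a b)
qed

lemma rowwise_rowwise_inv: "1 \<le> k \<Longrightarrow> rowwise (rowwise_inv k) = k"
  unfolding rowwise_def rowwise_inv_def by simp

lemma bij_betw_rowwise: "bij_betw rowwise (grid_V n) {1..card (grid_V n)}"
proof -
  have "card (grid_V n) = 3 * n"
    unfolding grid_V_def by (simp add: card_cartesian_product)
  moreover have "bij_betw rowwise (grid_V n) {1..3 * n}"
  proof (rule bij_betw_byWitness[where f' = rowwise_inv])
    show "\<forall>x\<in>grid_V n. rowwise_inv (rowwise x) = x"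
      unfolding grid_V_def using rowwise_inv_rowwise by auto
    show "\<forall>k\<in>{1..3 * n}. rowwise (rowwise_inv k) = k"
      using rowwise_rowwise_inv by simp
    show "rowwise ` grid_V n \<subseteq> {1..3 * n}"
      unfolding grid_V_def rowwise_def by auto
    show "rowwise_inv ` {1..3 * n} \<subseteq> grid_V n"
      unfolding grid_V_def rowwise_inv_def by auto
  qed
  ultimately show ?thesis by simp
qed

definition grid_succ :: "nat \<Rightarrow> nat \<times> nat \<Rightarrow> nat \<times> nat \<Rightarrow> bool" where
  "grid_succ n x y \<longleftrightarrow> 1 \<le> fst x \<and> fst x \<le> n \<and> 1 \<le> fst y \<and> fst y \<le> n \<and>
     1 \<le> snd x \<and> snd x \<le> 3 \<and> 1 \<le> snd y \<and> snd y \<le> 3 \<and>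
     ((fst y = fst x \<and> snd y = snd x + 1) \<or> (fst y = fst x + 1 \<and> snd y = snd x))"

definition grid_chord :: "nat \<Rightarrow> nat \<times> nat \<Rightarrow> nat \<times> nat \<Rightarrow> bool" where
  "grid_chord n x y \<longleftrightarrow> 1 \<le> fst x \<and> fst x \<le> n \<and> 1 \<le> fst y \<and> fst y \<le> n \<and>
     ((fst y = fst x + 1 \<and> ((snd x = 2 \<and> snd y = 1) \<or> (snd x = 3 \<and> snd y = 1) \<or> (snd x = 3 \<and> snd y = 2)))
      \<or> (fst y = fst x \<and> 2 \<le> fst x \<and> snd x = 1 \<and> snd y = 3))"

definition grid_adj :: "nat \<Rightarrow> nat \<times> nat \<Rightarrow> nat \<times> nat \<Rightarrow> bool" where
  "grid_adj n x y \<longleftrightarrow> grid_succ n x y \<or> grid_succ n y x"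

definition chord_adj :: "nat \<Rightarrow> nat \<times> nat \<Rightarrow> nat \<times> nat \<Rightarrow> bool" where
  "chord_adj n x y \<longleftrightarrow> grid_chord n x y \<or> grid_chord n y x"

definition grid_chords :: "nat \<Rightarrow> (nat \<times> nat) set set" where
  "grid_chords n = {{x, y} | x y. chord_adj n x y}"

lemma grid_adj_commute: "grid_adj n x y \<longleftrightarrow> grid_adj n y x"
  unfolding grid_adj_def by blast

lemma chord_adj_commute: "chord_adj n x y \<longleftrightarrow> chord_adj n y x"
  unfolding chord_adj_def by blast

lemma mem_grid_chords_iff: "{x, y} \<in> grid_chords n \<longleftrightarrow> chord_adj n x y"
proof
  assume "{x, y} \<in> grid_chords n"
  then obtain x' y' where "{x, y} = {x', y'}" "chord_adj n x' y'"
    unfolding grid_chords_def by blast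
  then show "chord_adj n x y" using chord_adj_commute by (metis doubleton_eq_iff)
qed (unfold grid_chords_def, blast)

lemma grid_succ_in_grid_E:
  assumes "grid_succ n x y"
  shows "{x, y} \<in> grid_E n"
proof -
  obtain a b c d where x: "x = (a, b)" and y: "y = (c, d)" by force
  have "(c = a \<and> d = b + 1 \<and> 1 \<le> a \<and> a \<le> n \<and> 1 \<le> b \<and> b + 1 \<le> 3) \<or>
        (c = a + 1 \<and> d = b \<and> 1 \<le> a \<and> a + 1 \<le> n \<and> 1 \<le> b \<and> b \<le> 3)"
    using assms unfolding x y grid_succ_def by auto
  then show ?thesis unfolding x y grid_E_def by blast
qed

lemma mem_grid_E_iff: "{x, y} \<in> grid_E n \<longleftrightarrow> grid_adj n x y"
proof
  assume "{x, y} \<in> grid_E n"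
  then show "grid_adj n x y"
    unfolding grid_E_def grid_adj_def grid_succ_def by (auto simp: doubleton_eq_iff)
next
  assume "grid_adj n x y"
  then show "{x, y} \<in> grid_E n"
    unfolding grid_adj_def using grid_succ_in_grid_E[of n x y] grid_succ_in_grid_E[of n y x]
    by (auto simp: insert_commute)
qed

lemma later_neighbour_cases:
  assumes "grid_adj n (a, b) u \<or> chord_adj n (a, b) u" "rowwise (a, b) < rowwise u"
  shows "1 \<le> a \<and> a \<le> n \<and> 1 \<le> b \<and> b \<le> 3 \<and>
    ((u = (a, b + 1) \<and> b \<le> 2) \<or> (u = (a + 1, b) \<and> a < n) \<or> (u = (a + 1, 1) \<and> b \<ge> 2 \<and> a < n)
     \<or> (u = (a + 1, 2) \<and> b = 3 \<and> a < n) \<or> (u = (a, 3) \<and> b = 1 \<and> a \<ge> 2))"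
  using assms unfolding grid_adj_def chord_adj_def grid_succ_def grid_chord_def rowwise_def
  by (cases u) (elim disjE conjE; simp)

lemma later_neighbours_adjacent:
  assumes "u \<noteq> v" "rowwise u > rowwise (a, b)" "rowwise v > rowwise (a, b)"
    "grid_adj n (a, b) u \<or> chord_adj n (a, b) u" "grid_adj n (a, b) v \<or> chord_adj n (a, b) v"
  shows "grid_adj n u v \<or> chord_adj n u v"
  using later_neighbour_cases[OF assms(4,2)] later_neighbour_cases[OF assms(5,3)] assms(1)
  by (elim conjE disjE)
    (simp_all add: grid_adj_def chord_adj_def grid_succ_def grid_chord_def, arith+)

lemma D_fill_grid_subset: "D_fill (grid_V n) rowwise (grid_E n) \<subseteq> grid_E n \<union> grid_chords n"
  unfolding D_fill_def
proof (rule fill_seq_subset_if_closed)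
  fix u v w :: "nat \<times> nat"
  assume uv: "u \<noteq> v" "rowwise u > rowwise w" "rowwise v > rowwise w"
    and "{u, w} \<in> grid_E n \<union> grid_chords n" "{v, w} \<in> grid_E n \<union> grid_chords n"
  then have "grid_adj n w u \<or> chord_adj n w u" "grid_adj n w v \<or> chord_adj n w v"
    by (auto simp: mem_grid_E_iff mem_grid_chords_iff grid_adj_commute chord_adj_commute)
  then have "grid_adj n u v \<or> chord_adj n u v"
    using later_neighbours_adjacent[of u v "fst w" "snd w" n] uv by simp
  then show "{u, v} \<in> grid_E n \<union> grid_chords n"
    by (simp add: mem_grid_E_iff mem_grid_chords_iff)
qed simp

lemma grid_chords_triangle_free:
  assumes "chord_adj n u v" "chord_adj n v w" "chord_adj n u w"
  shows False
proof -
  obtain a b c d e f where "u = (a, b)" "v = (c, d)" "w = (e, f)" by force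
  with assms show False
    unfolding chord_adj_def grid_chord_def by (elim disjE conjE) simp_all
qed

theorem lemma10:
  fixes n :: nat
  assumes "n \<ge> 1"
  shows "GB_ordering (grid_V n) (grid_E n) rowwise"
  using bij_betw_rowwise D_fill_grid_subset
  by (rule GB_orderingI) (auto simp: mem_grid_chords_iff intro: grid_chords_triangle_free)

end
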